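(* Let $\{\sigma_j\colon\mathcal{A}^+\to\mathcal{B}_j^+\}_{j\in J}$ be a family of morphisms such that for every $a\in\mathcal{A}$ the length $\ell_a:=|\sigma_j(a)|$ does not depend on $j\in J$, and let $u,v\in\mathcal{A}^+$ with $|u|\ge\ell:=\sum_{a\in\mathcal{A}}\ell_a$. Assume that $u$ and $v$ start with different letters and that $\sigma_j(u)$ is a prefix of $\sigma_j(v)$ for every $j\in J$. Then there exist a letter-onto morphism $q\colon\mathcal{A}^+\to\mathcal{C}^+$ with $\#\mathcal{C}<\#\mathcal{A}$ and morphisms $\{p_j\colon\mathcal{C}^+\to\mathcal{B}_j^+\}_{j\in J}$ such that for every $c\in\mathcal{C}$ the length $|p_j(c)|$ does not depend on $j\in J$, and $\sigma_j=p_jq$ for every $j\in J$.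
   Context: Alphabets are finite sets; $\mathcal{A}^+$ is the free semigroup of nonempty finite words over $\mathcal{A}$; a morphism is a semigroup homomorphism (determined by images of letters). A word $w$ is a prefix of $w'$ if $w'=ws$ for some possibly empty word $s$. A morphism $q\colon\mathcal{A}^+\to\mathcal{C}^+$ is letter-onto if every letter of $\mathcal{C}$ occurs in some $q(a)$. *)

theory Defs
  imports Main "HOL-Library.Sublist"
begin

text \<open>A morphism A+ -> B+ is given by
  the images of letters: a map f with f a a nonempty word over B for every a in A.\<close>

definition morph_app :: "('a \<Rightarrow> 'b list) \<Rightarrow> 'a list \<Rightarrow> 'b list" where
  "morph_app f w = concat (map f w)"

definition is_word :: "'a set \<Rightarrow> 'a list \<Rightarrow> bool" where
  "is_word A w \<longleftrightarrow> w \<noteq> [] \<and> set w \<subseteq> A"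

definition is_morphism :: "'a set \<Rightarrow> 'b set \<Rightarrow> ('a \<Rightarrow> 'b list) \<Rightarrow> bool" where
  "is_morphism A B f \<longleftrightarrow> (\<forall>a\<in>A. is_word B (f a))"

definition letter_onto :: "'a set \<Rightarrow> 'c set \<Rightarrow> ('a \<Rightarrow> 'c list) \<Rightarrow> bool" where
  "letter_onto A C q \<longleftrightarrow> (\<forall>c\<in>C. \<exists>a\<in>A. c \<in> set (q a))"

end

theory Submission
  imports Defs
begin

text \<open>Let \<open>x\<close> and \<open>y\<close> be the first letters of \<open>u\<close> and \<open>v\<close>. Since the images of \<open>u\<close> and \<open>v\<close>
  are comparable for the prefix order, so are \<open>\<sigma>\<^sub>j(x)\<close> and \<open>\<sigma>\<^sub>j(y)\<close>. If \<open>\<ell>\<^sub>x = \<ell>\<^sub>y\<close> they are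
  equal and identifying \<open>y\<close> with \<open>x\<close> simplifies the family. If, say, \<open>\<ell>\<^sub>x < \<ell>\<^sub>y\<close>, then
  \<open>\<sigma>\<^sub>j(y) = \<sigma>\<^sub>j(x) w\<^sub>j\<close> and \<open>\<sigma>\<^sub>j = \<sigma>'\<^sub>j \<tau>\<close> with \<open>\<tau>(y) = xy\<close> and \<open>\<sigma>'\<^sub>j(y) = w\<^sub>j\<close>; cancelling
  \<open>\<sigma>\<^sub>j(x)\<close> from the images of \<open>\<tau>(u)\<close> and \<open>\<tau>(v)\<close> gives a new comparable pair for \<open>\<sigma>'\<close>,
  whose total length \<open>\<ell> - \<ell>\<^sub>x\<close> is smaller, and a simplification of \<open>\<sigma>'\<close> yields one of \<open>\<sigma>\<close>.
  The induction goes through because the images of both words have length at least \<open>\<ell>\<close>, a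
  property that survives the cancellation.\<close>

definition simplifiable :: "'a set \<Rightarrow> 'j set \<Rightarrow> ('j \<Rightarrow> 'b set) \<Rightarrow> ('j \<Rightarrow> 'a \<Rightarrow> 'b list) \<Rightarrow> bool"
  where "simplifiable A J B \<sigma> \<longleftrightarrow>
    (\<exists>(C :: 'a set) (q :: 'a \<Rightarrow> 'a list) (p :: 'j \<Rightarrow> 'a \<Rightarrow> 'b list).
       finite C \<and> card C < card A \<and>
       is_morphism A C q \<and> letter_onto A C q \<and>
       (\<forall>j\<in>J. is_morphism C (B j) (p j)) \<and>
       (\<forall>c\<in>C. \<forall>j1\<in>J. \<forall>j2\<in>J. length (p j1 c) = length (p j2 c)) \<and>
       (\<forall>j\<in>J. \<forall>a\<in>A. \<sigma> j a = morph_app (p j) (q a)))"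

text \<open>Symmetric in \<open>u\<close> and \<open>v\<close>, so that the case \<open>\<ell>\<^sub>y < \<ell>\<^sub>x\<close> reduces to \<open>\<ell>\<^sub>x < \<ell>\<^sub>y\<close>. The sum of \<open>\<ell>\<close>
  over the letters of \<open>u\<close> is the common length of the images \<open>\<sigma>\<^sub>j(u)\<close>, expressed without \<open>j\<close>
  so that it is meaningful for empty \<open>J\<close>.\<close>

definition compatible_pair ::
    "'a set \<Rightarrow> 'j set \<Rightarrow> ('j \<Rightarrow> 'a \<Rightarrow> 'b list) \<Rightarrow> ('a \<Rightarrow> nat) \<Rightarrow> 'a list \<Rightarrow> 'a list \<Rightarrow> bool"
  where "compatible_pair A J \<sigma> ell u v \<longleftrightarrow>
    is_word A u \<and> is_word A v \<and> hd u \<noteq> hd v \<and>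
    (\<forall>j\<in>J. prefix (morph_app (\<sigma> j) u) (morph_app (\<sigma> j) v) \<or>
            prefix (morph_app (\<sigma> j) v) (morph_app (\<sigma> j) u)) \<and>
    sum ell A \<le> sum_list (map ell u) \<and> sum ell A \<le> sum_list (map ell v)"

definition split_letter :: "'a \<Rightarrow> 'a \<Rightarrow> 'a \<Rightarrow> 'a list"
  where "split_letter x y a = (if a = y then [x, y] else [a])"

lemma morph_app_Nil [simp]: "morph_app f [] = []"
  by (simp add: morph_app_def)

lemma morph_app_Cons [simp]: "morph_app f (a # w) = f a @ morph_app f w"
  by (simp add: morph_app_def)

lemma morph_app_append [simp]: "morph_app f (w @ w') = morph_app f w @ morph_app f w'"
  by (simp add: morph_app_def)

lemma set_morph_app: "set (morph_app f w) = (\<Union>a\<in>set w. set (f a))"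
  by (simp add: morph_app_def)

lemma morph_app_morph_app: "morph_app f (morph_app g w) = morph_app (\<lambda>a. morph_app f (g a)) w"
  by (induction w) auto

lemma morph_app_cong: "(\<And>a. a \<in> set w \<Longrightarrow> f a = g a) \<Longrightarrow> morph_app f w = morph_app g w"
  by (induction w) auto

lemma is_word_morph_app: "is_morphism A C f \<Longrightarrow> is_word A w \<Longrightarrow> is_word C (morph_app f w)"
  unfolding is_word_def is_morphism_def by (cases w) (auto simp: set_morph_app)

lemma is_morphism_fun_upd_drop:
  assumes "is_morphism A B f" "n < length (f y)"
  shows "is_morphism A B (f(y := drop n (f y)))"
  using assms set_drop_subset[of n "f y"] unfolding is_morphism_def is_word_def by auto

lemma length_pos_if_is_morphism: "is_morphism A B f \<Longrightarrow> a \<in> A \<Longrightarrow> 0 < length (f a)"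
  unfolding is_morphism_def is_word_def by blast

lemma length_morph_app:
  "(\<And>a. a \<in> set w \<Longrightarrow> length (f a) = ell a) \<Longrightarrow> length (morph_app f w) = sum_list (map ell w)"
  by (induction w) auto

lemma sum_fun_upd_diff:
  fixes f :: "'a \<Rightarrow> nat"
  assumes "finite A" "y \<in> A" "d \<le> f y"
  shows "sum (f(y := f y - d)) A = sum f A - d"
proof -
  have "sum (f(y := f y - d)) A = (f y - d) + sum f (A - {y})"
    using assms(1,2) by (simp add: sum.remove)
  also have "\<dots> = sum f A - d"
    using assms by (simp add: sum.remove)
  finally show ?thesis .
qed

lemma prefix_of_comparable:
  assumes "prefix xs ys \<or> prefix ys xs" "prefix xs' xs" "prefix ys' ys"
    and "length xs' \<le> length ys'"
  shows "prefix xs' ys'"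
  using assms prefix_length_prefix prefix_order.trans by metis

lemma morph_app_split_letter:
  assumes "prefix (f x) (f y)" "x \<noteq> y"
  shows "morph_app (f(y := drop (length (f x)) (f y))) (split_letter x y a) = f a"
  using assms by (auto simp: split_letter_def prefix_def)

lemma morph_app_split_letter_word:
  assumes "prefix (f x) (f y)" "x \<noteq> y"
  shows "morph_app (f(y := drop (length (f x)) (f y))) (morph_app (split_letter x y) w) = morph_app f w"
  by (simp add: morph_app_morph_app morph_app_split_letter[OF assms])

lemma morph_app_split_letter_tl:
  assumes "prefix (f x) (f y)" "x \<noteq> y" "w \<noteq> []" "hd w \<in> {x, y}"
  shows "morph_app f w =
    f x @ morph_app (f(y := drop (length (f x)) (f y))) (tl (morph_app (split_letter x y) w))"
proof -
  obtain w' where "morph_app (split_letter x y) w = x # w'"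
    using assms(2-4) by (cases w) (auto simp: split_letter_def)
  then show ?thesis
    using morph_app_split_letter_word[OF assms(1,2), of w] assms(2) by simp
qed

lemma sum_list_map_split_letter:
  fixes ell :: "'a \<Rightarrow> nat"
  assumes "x \<noteq> y" "ell x \<le> ell y"
  shows "sum_list (map (ell(y := ell y - ell x)) (morph_app (split_letter x y) w)) = sum_list (map ell w)"
  using assms by (induction w) (auto simp: split_letter_def)

lemma simplifiable_if_images_eq:
  assumes "finite A" "x \<in> A" "y \<in> A" "x \<noteq> y" "\<forall>j\<in>J. \<sigma> j x = \<sigma> j y"
    and "\<forall>j\<in>J. is_morphism A (B j) (\<sigma> j)" "\<forall>j\<in>J. \<forall>a\<in>A. length (\<sigma> j a) = ell a"
  shows "simplifiable A J B \<sigma>"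
  unfolding simplifiable_def
proof (intro exI conjI)
  let ?q = "\<lambda>a. if a = y then [x] else [a]"
  show "finite (A - {y})"
    using assms(1) by simp
  show "card (A - {y}) < card A"
    using assms(1,3) by (rule card_Diff1_less)
  show "is_morphism A (A - {y}) ?q" "letter_onto A (A - {y}) ?q"
    using assms(2,4) by (auto simp: is_morphism_def is_word_def letter_onto_def)
  show "\<forall>j\<in>J. is_morphism (A - {y}) (B j) (\<sigma> j)"
    using assms(6) by (auto simp: is_morphism_def)
  show "\<forall>c\<in>A - {y}. \<forall>j1\<in>J. \<forall>j2\<in>J. length (\<sigma> j1 c) = length (\<sigma> j2 c)"
    using assms(7) by auto
  show "\<forall>j\<in>J. \<forall>a\<in>A. \<sigma> j a = morph_app (\<sigma> j) (?q a)"
    using assms(5) by auto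
qed

lemma simplifiable_if_factor:
  fixes \<sigma> \<sigma>' :: "'j \<Rightarrow> 'a \<Rightarrow> 'b list"
  assumes \<tau>: "\<forall>a\<in>A. is_word A (\<tau> a) \<and> a \<in> set (\<tau> a)"
    and factor: "\<forall>j\<in>J. \<forall>a\<in>A. \<sigma> j a = morph_app (\<sigma>' j) (\<tau> a)"
    and "simplifiable A J B \<sigma>'"
  shows "simplifiable A J B \<sigma>"
proof -
  obtain C :: "'a set" and q :: "'a \<Rightarrow> 'a list" and p :: "'j \<Rightarrow> 'a \<Rightarrow> 'b list"
    where C: "finite C" "card C < card A" "is_morphism A C q" "letter_onto A C q"
    and p: "\<forall>j\<in>J. is_morphism C (B j) (p j)"
      "\<forall>c\<in>C. \<forall>j1\<in>J. \<forall>j2\<in>J. length (p j1 c) = length (p j2 c)"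
    and \<sigma>': "\<forall>j\<in>J. \<forall>a\<in>A. \<sigma>' j a = morph_app (p j) (q a)"
    using \<open>simplifiable A J B \<sigma>'\<close> unfolding simplifiable_def by (elim exE conjE) (rule that; assumption)
  let ?q = "\<lambda>a. morph_app q (\<tau> a)"
  have "is_morphism A C ?q"
    using \<tau> C(3) is_word_morph_app unfolding is_morphism_def by blast
  moreover have "letter_onto A C ?q"
    using C(4) \<tau> unfolding letter_onto_def set_morph_app by blast
  moreover have "\<forall>j\<in>J. \<forall>a\<in>A. \<sigma> j a = morph_app (p j) (?q a)"
  proof (intro ballI)
    fix j a assume "j \<in> J" "a \<in> A"
    then have "set (\<tau> a) \<subseteq> A"
      using \<tau> by (auto simp: is_word_def)
    then have "morph_app (\<sigma>' j) (\<tau> a) = morph_app (\<lambda>b. morph_app (p j) (q b)) (\<tau> a)"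
      using \<sigma>' \<open>j \<in> J\<close> by (intro morph_app_cong) auto
    then show "\<sigma> j a = morph_app (p j) (?q a)"
      using factor \<open>j \<in> J\<close> \<open>a \<in> A\<close> by (simp add: morph_app_morph_app)
  qed
  ultimately show ?thesis
    unfolding simplifiable_def using C(1,2) p by (intro exI[of _ C] exI[of _ ?q] exI[of _ p]) blast
qed

lemma simplifiable_split_letter:
  assumes "x \<in> A" "x \<noteq> y" "\<forall>j\<in>J. prefix (\<sigma> j x) (\<sigma> j y)"
    and "simplifiable A J B (\<lambda>j. (\<sigma> j)(y := drop (length (\<sigma> j x)) (\<sigma> j y)))"
  shows "simplifiable A J B \<sigma>"
proof (rule simplifiable_if_factor)
  show "\<forall>a\<in>A. is_word A (split_letter x y a) \<and> a \<in> set (split_letter x y a)"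
    using \<open>x \<in> A\<close> by (auto simp: split_letter_def is_word_def)
  show "\<forall>j\<in>J. \<forall>a\<in>A. \<sigma> j a =
      morph_app ((\<sigma> j)(y := drop (length (\<sigma> j x)) (\<sigma> j y))) (split_letter x y a)"
  proof (intro ballI)
    fix j a assume "j \<in> J"
    then show "\<sigma> j a = morph_app ((\<sigma> j)(y := drop (length (\<sigma> j x)) (\<sigma> j y))) (split_letter x y a)"
      using assms(2,3) by (simp add: morph_app_split_letter)
  qed
qed fact

lemma compatible_pair_sym: "compatible_pair A J \<sigma> ell u v \<Longrightarrow> compatible_pair A J \<sigma> ell v u"
  unfolding compatible_pair_def by auto

lemma compatible_pair_prefix_hd:
  assumes "compatible_pair A J \<sigma> ell u v" "j \<in> J"
    and "length (\<sigma> j (hd u)) \<le> length (\<sigma> j (hd v))"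
  shows "prefix (\<sigma> j (hd u)) (\<sigma> j (hd v))"
proof -
  have "u \<noteq> []" "v \<noteq> []"
    using assms(1) by (auto simp: compatible_pair_def is_word_def)
  then have "prefix (\<sigma> j (hd u)) (morph_app (\<sigma> j) u)" "prefix (\<sigma> j (hd v)) (morph_app (\<sigma> j) v)"
    by (auto simp: neq_Nil_conv)
  then show ?thesis
    using assms prefix_of_comparable unfolding compatible_pair_def by blast
qed

lemma compatible_pair_split_letter:
  assumes pair: "compatible_pair A J \<sigma> ell u v"
    and x: "hd u = x" and y: "hd v = y" and lt: "ell x < ell y"
    and "finite A" and prefix_xy: "\<forall>j\<in>J. prefix (\<sigma> j x) (\<sigma> j y)"
  shows "compatible_pair A J (\<lambda>j. (\<sigma> j)(y := drop (length (\<sigma> j x)) (\<sigma> j y)))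
    (ell(y := ell y - ell x))
    (tl (morph_app (split_letter x y) u)) (tl (morph_app (split_letter x y) v))"
proof -
  let ?\<sigma>' = "\<lambda>j. (\<sigma> j)(y := drop (length (\<sigma> j x)) (\<sigma> j y))"
  let ?ell' = "ell(y := ell y - ell x)" and ?\<tau> = "split_letter x y"
  let ?u' = "tl (morph_app ?\<tau> u)" and ?v' = "tl (morph_app ?\<tau> v)"
  obtain us vs where u: "u = x # us" and v: "v = y # vs" and "x \<noteq> y"
    and xA: "x \<in> A" and yA: "y \<in> A" and usA: "set us \<subseteq> A" and vsA: "set vs \<subseteq> A"
    using pair x y by (cases u; cases v) (auto simp: compatible_pair_def is_word_def)
  have u': "?u' = morph_app ?\<tau> us"
    using u \<open>x \<noteq> y\<close> by (simp add: split_letter_def)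
  have v': "?v' = y # morph_app ?\<tau> vs"
    using v by (simp add: split_letter_def)
  have "ell x + ell y \<le> sum ell A"
    using sum_mono2[OF \<open>finite A\<close>, of "{x, y}" ell] xA yA \<open>x \<noteq> y\<close> by simp
  moreover have weights: "sum ell A \<le> sum_list (map ell u)" "sum ell A \<le> sum_list (map ell v)"
    using pair unfolding compatible_pair_def by auto
  ultimately have "us \<noteq> []"
    using lt u by auto
  have sum_ell': "sum ?ell' A = sum ell A - ell x"
    using \<open>finite A\<close> yA lt by (intro sum_fun_upd_diff) auto
  have sum_list_ell': "sum_list (map ?ell' (morph_app ?\<tau> w)) = sum_list (map ell w)" for w
    using \<open>x \<noteq> y\<close> lt by (simp add: sum_list_map_split_letter)
  show ?thesis
    unfolding compatible_pair_def
  proof (intro conjI ballI)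
    show "is_word A ?u'" "hd ?u' \<noteq> hd ?v'"
      unfolding u' v' using \<open>us \<noteq> []\<close> usA xA \<open>x \<noteq> y\<close>
      by (auto simp: is_word_def set_morph_app split_letter_def neq_Nil_conv split: if_splits)
    show "is_word A ?v'"
      unfolding v' using vsA xA yA
      by (auto simp: is_word_def set_morph_app split_letter_def split: if_splits)
    show "sum ?ell' A \<le> sum_list (map ?ell' ?u')" "sum ?ell' A \<le> sum_list (map ?ell' ?v')"
      unfolding u' v' sum_ell' list.map sum_list.Cons sum_list_ell' using weights u v lt by auto
  next
    fix j assume "j \<in> J"
    have "morph_app (\<sigma> j) u = \<sigma> j x @ morph_app (?\<sigma>' j) ?u'"
      and "morph_app (\<sigma> j) v = \<sigma> j x @ morph_app (?\<sigma>' j) ?v'"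
      using prefix_xy \<open>j \<in> J\<close> \<open>x \<noteq> y\<close> u v
      by (simp_all add: morph_app_split_letter_tl del: morph_app_Cons)
    then show "prefix (morph_app (?\<sigma>' j) ?u') (morph_app (?\<sigma>' j) ?v') \<or>
        prefix (morph_app (?\<sigma>' j) ?v') (morph_app (?\<sigma>' j) ?u')"
      using pair \<open>j \<in> J\<close> unfolding compatible_pair_def by auto
  qed
qed

lemma simplifiable_if_compatible_pair:
  assumes "finite A"
    and "\<forall>j\<in>J. is_morphism A (B j) (\<sigma> j)"
    and "\<forall>j\<in>J. \<forall>a\<in>A. length (\<sigma> j a) = ell a"
    and "\<forall>a\<in>A. 0 < ell a"
    and "compatible_pair A J \<sigma> ell u v"
  shows "simplifiable A J B \<sigma>"
  using assms(2-)
proof (induction "sum ell A" arbitrary: \<sigma> ell u v rule: less_induct)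
  case less
  note morph = less.prems(1) and len = less.prems(2) and pos = less.prems(3)
  have first_letter_shorter: "simplifiable A J B \<sigma>"
    if pair: "compatible_pair A J \<sigma> ell u v" and lt: "ell (hd u) < ell (hd v)" for u v
  proof -
    define x y where "x = hd u" and "y = hd v"
    have "x \<in> A" "y \<in> A" "x \<noteq> y"
      using pair unfolding compatible_pair_def is_word_def x_def y_def by auto
    have "ell x < ell y"
      using lt unfolding x_def y_def .
    have prefix_xy: "\<forall>j\<in>J. prefix (\<sigma> j x) (\<sigma> j y)"
      using compatible_pair_prefix_hd[OF pair] len lt \<open>x \<in> A\<close> \<open>y \<in> A\<close>
      unfolding x_def y_def by simp
    let ?\<sigma>' = "\<lambda>j. (\<sigma> j)(y := drop (length (\<sigma> j x)) (\<sigma> j y))"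
    let ?ell' = "ell(y := ell y - ell x)"
    have reduced: "simplifiable A J B ?\<sigma>'"
    proof (rule less.hyps)
      have "sum ?ell' A = sum ell A - ell x"
        using \<open>finite A\<close> \<open>y \<in> A\<close> \<open>ell x < ell y\<close> by (intro sum_fun_upd_diff) auto
      moreover have "ell x \<le> sum ell A"
        using \<open>x \<in> A\<close> \<open>finite A\<close> by (intro member_le_sum) auto
      moreover have "0 < ell x"
        using pos \<open>x \<in> A\<close> by blast
      ultimately show "sum ?ell' A < sum ell A"
        by linarith
      show "\<forall>j\<in>J. is_morphism A (B j) (?\<sigma>' j)"
        using morph len \<open>x \<in> A\<close> \<open>y \<in> A\<close> \<open>ell x < ell y\<close> by (simp add: is_morphism_fun_upd_drop)
      show "\<forall>j\<in>J. \<forall>a\<in>A. length (?\<sigma>' j a) = ?ell' a"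
        using len \<open>x \<in> A\<close> by simp
      show "\<forall>a\<in>A. 0 < ?ell' a"
        using pos \<open>ell x < ell y\<close> by simp
      show "compatible_pair A J ?\<sigma>' ?ell'
          (tl (morph_app (split_letter x y) u)) (tl (morph_app (split_letter x y) v))"
        using pair x_def[symmetric] y_def[symmetric] \<open>ell x < ell y\<close> \<open>finite A\<close> prefix_xy
        by (rule compatible_pair_split_letter)
    qed
    show ?thesis
      using \<open>x \<in> A\<close> \<open>x \<noteq> y\<close> prefix_xy reduced by (rule simplifiable_split_letter)
  qed
  have "hd u \<in> A" "hd v \<in> A" "hd u \<noteq> hd v"
    using less.prems(4) unfolding compatible_pair_def is_word_def by auto
  consider "ell (hd u) = ell (hd v)" | "ell (hd u) < ell (hd v)" | "ell (hd v) < ell (hd u)"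
    by linarith
  then show ?case
  proof cases
    case 1
    have "\<sigma> j (hd u) = \<sigma> j (hd v)" if "j \<in> J" for j
    proof (rule prefix_order.antisym)
      show "prefix (\<sigma> j (hd u)) (\<sigma> j (hd v))" "prefix (\<sigma> j (hd v)) (\<sigma> j (hd u))"
        using compatible_pair_prefix_hd[OF less.prems(4) \<open>j \<in> J\<close>]
          compatible_pair_prefix_hd[OF compatible_pair_sym[OF less.prems(4)] \<open>j \<in> J\<close>] len \<open>j \<in> J\<close> \<open>hd u \<in> A\<close> \<open>hd v \<in> A\<close> 1 by simp_all
    qed
    then show ?thesis
      using \<open>finite A\<close> \<open>hd u \<in> A\<close> \<open>hd v \<in> A\<close> \<open>hd u \<noteq> hd v\<close> morph len
      by (intro simplifiable_if_images_eq) auto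
  next
    case 2
    with less.prems(4) show ?thesis by (rule first_letter_shorter)
  next
    case 3
    with compatible_pair_sym[OF less.prems(4)] show ?thesis by (rule first_letter_shorter)
  qed
qed

lemma compatible_pair_if_prefix:
  assumes "j \<in> J" "\<forall>a\<in>A. 0 < ell a" "\<forall>a\<in>A. length (\<sigma> j a) = ell a"
    and u: "is_word A u" and v: "is_word A v" "hd u \<noteq> hd v" "sum ell A \<le> length u"
    and pref: "\<forall>j\<in>J. prefix (morph_app (\<sigma> j) u) (morph_app (\<sigma> j) v)"
  shows "compatible_pair A J \<sigma> ell u v"
proof -
  have image_length: "length (morph_app (\<sigma> j) w) = sum_list (map ell w)" if "is_word A w" for w
    using that assms(3) by (intro length_morph_app) (auto simp: is_word_def)
  have "sum_list (map (\<lambda>_. 1) u) \<le> sum_list (map ell u)"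
    using assms(2) u by (intro sum_list_mono) (auto simp: is_word_def Suc_le_eq)
  then have "length u \<le> sum_list (map ell u)"
    by (simp add: sum_list_triv)
  moreover have "sum_list (map ell u) \<le> sum_list (map ell v)"
    using prefix_length_le[OF pref[rule_format, OF \<open>j \<in> J\<close>]] image_length u v by simp
  ultimately show ?thesis
    using assms pref unfolding compatible_pair_def by auto
qed

theorem lemma3p2:
  fixes A :: "'a set" and J :: "'j set" and B :: "'j \<Rightarrow> 'b set"
    and \<sigma> :: "'j \<Rightarrow> 'a \<Rightarrow> 'b list" and ell :: "'a \<Rightarrow> nat"
    and u v :: "'a list"
  assumes finA: "finite A"
    and finB: "\<forall>j\<in>J. finite (B j)"
    and morph: "\<forall>j\<in>J. is_morphism A (B j) (\<sigma> j)"
    and len: "\<forall>j\<in>J. \<forall>a\<in>A. length (\<sigma> j a) = ell a"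
    and u: "is_word A u" and v: "is_word A v"
    and ulen: "length u \<ge> (\<Sum>a\<in>A. ell a)"
    and hd_diff: "hd u \<noteq> hd v"
    and pref: "\<forall>j\<in>J. prefix (morph_app (\<sigma> j) u) (morph_app (\<sigma> j) v)"
  shows "\<exists>(C :: 'a set) (q :: 'a \<Rightarrow> 'a list) (p :: 'j \<Rightarrow> 'a \<Rightarrow> 'b list).
           finite C \<and> card C < card A \<and>
           is_morphism A C q \<and> letter_onto A C q \<and>
           (\<forall>j\<in>J. is_morphism C (B j) (p j)) \<and>
           (\<forall>c\<in>C. \<forall>j1\<in>J. \<forall>j2\<in>J. length (p j1 c) = length (p j2 c)) \<and>
           (\<forall>j\<in>J. \<forall>a\<in>A. \<sigma> j a = morph_app (p j) (q a))"
proof -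
  have "simplifiable A J B \<sigma>"
  proof (cases "J = {}")
    case True
    then show ?thesis
      using finA u v hd_diff by (intro simplifiable_if_images_eq) (auto simp: is_word_def)
  next
    case False
    then obtain j where "j \<in> J" by blast
    have pos: "\<forall>a\<in>A. 0 < ell a"
      using length_pos_if_is_morphism[OF morph[rule_format, OF \<open>j \<in> J\<close>]] len \<open>j \<in> J\<close> by simp
    have "compatible_pair A J \<sigma> ell u v"
      using \<open>j \<in> J\<close> pos len u v hd_diff ulen pref by (intro compatible_pair_if_prefix) auto
    then show ?thesis
      using finA morph len pos by (intro simplifiable_if_compatible_pair)
  qed
  then show ?thesis
    unfolding simplifiable_def .
qed

end
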